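(* Let $X$ be a finite set, $R>1$, $p\in(0,1]$, and let $\mathbf{A}\sim\pi$ be an $R$-spread random subset of $X$. Then there exists a coupling $\mathbb{P}_p$ of $\mathbf{A}\sim\pi$, $\mathbf{A}'\sim\pi$ and $\mathbf{V}\sim\mathbb{Q}_p$ (random subsets of $X$) under which $\mathbf{A}$ and $\mathbf{V}$ are independent and \[ \mathbb{E}_{\mathbb{P}_p}\bigg[\frac{|\mathbf{A}'\setminus\mathbf{V}|}{|\mathbf{A}|}\,\mathbf{1}\{\mathbf{A}\neq\emptyset\}\bigg]\le \frac{7}{(pR)^{1/3}}. \] Moreover, the marginal law of $\mathbf{A}'$ is the same as that of $\mathbf{A}$, and therefore $\mathbf{A}'$ is also $R$-spread.
   Context: For $R>1$, a random subset $\mathbf{A}\sim\pi$ of $X$ is called $R$-spread if for every fixed $S\subseteq X$, $\pi(S\subseteq \mathbf{A})\le R^{-|S|}$. For $p\in[0,1]$, $\mathbb{Q}_p$ denotes the law of the $p$-biased random subset of $X$, which includes each element of $X$ independently with probability $p$. The expression $\frac{|\mathbf{A}'\setminus\mathbf{V}|}{|\mathbf{A}|}\mathbf{1}\{\mathbf{A}\ne\emptyset\}$ is interpreted as $0$ when $\mathbf{A}=\emptyset$. *)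

theory Defs
  imports "HOL-Probability.Probability"
begin

definition random_subset_of :: "'a set \<Rightarrow> 'a set pmf \<Rightarrow> bool" where
  "random_subset_of X \<pi> \<longleftrightarrow> set_pmf \<pi> \<subseteq> Pow X"

definition spread :: "real \<Rightarrow> 'a set \<Rightarrow> 'a set pmf \<Rightarrow> bool" where
  "spread R X \<pi> \<longleftrightarrow> random_subset_of X \<pi> \<and>
     (\<forall>S. S \<subseteq> X \<longrightarrow> measure_pmf.prob \<pi> {A. S \<subseteq> A} \<le> inverse (R ^ card S))"

definition Qp :: "real \<Rightarrow> 'a set \<Rightarrow> 'a set pmf" where
  "Qp p X = map_pmf (\<lambda>f. {x \<in> X. f x}) (Pi_pmf X False (\<lambda>_. bernoulli_pmf p))"

end

theory Submission
  imports Defs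
begin

text \<open>
  Draw \<open>A \<sim> \<pi>\<close> and \<open>V \<sim> Q\<^sub>p\<close> independently and resample \<open>A'\<close> from the
  posterior law of \<open>A\<close> given \<open>W = A \<union> V\<close>. Then \<open>(A', W)\<close> has the law of \<open>(A, W)\<close>, so
  \<open>A' \<sim> \<pi>\<close>, and \<open>A' \<subseteq> A \<union> V\<close> gives \<open>|A' - V| \<le> |A \<inter> A'|\<close>.
  The posterior of \<open>a\<close> given \<open>W = w\<close> is proportional to \<open>\<pi>(a) / p^|a|\<close> on subsets
  of \<open>w\<close>; writing \<open>Z(w)\<close> for its normalizing constant and \<open>H(c) = E[1 / Z(c \<union> V)]\<close>,
  one finds \<open>P(A = a, A' = a') = \<pi>(a) \<pi>(a') H(a \<union> a') / p^|a \<inter> a'|\<close>, where \<open>H\<close> is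
  antitone on the support of \<open>\<pi>\<close> and \<open>E[H(A)] \<le> 1\<close>. So the probability that \<open>A'\<close>
  meets more than an \<open>\<epsilon>\<close>-fraction of \<open>A\<close> is at most a tail of \<open>p^-|a \<inter> A|\<close> under
  \<open>\<pi>\<close>, which \<open>R\<close>-spreadness bounds by \<open>e / (\<epsilon> p R)\<close> through the exponential moment
  \<open>E[\<mu>^|a \<inter> A|] \<le> (1 + (\<mu> - 1) / R)^|a|\<close>. Taking \<open>\<epsilon> = (p R)^(-1/3)\<close> gives
  \<open>7 / (p R)^(1/3)\<close>.
\<close>

section \<open>Posterior laws\<close>

lemma pmf_map_inj_on_superset:
  assumes "inj_on f S" "set_pmf M \<subseteq> S" "x \<in> S"
  shows "pmf (map_pmf f M) (f x) = pmf M x"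
proof -
  have "pmf (map_pmf f M) (f x) = measure M (f -` {f x} \<inter> set_pmf M)"
    by (simp add: pmf_map measure_Int_set_pmf)
  also have "f -` {f x} \<inter> set_pmf M = {x} \<inter> set_pmf M"
    using assms by (auto simp: inj_on_def)
  finally show ?thesis
    by (simp add: measure_Int_set_pmf measure_pmf_single)
qed

lemma pmf_bind_Pair:
  "pmf (bind_pmf M (\<lambda>b. map_pmf (Pair b) (N b))) (a, x) = pmf M a * pmf (N a) x"
proof -
  have "pmf (bind_pmf M (\<lambda>b. map_pmf (Pair b) (N b))) (a, x)
          = (\<Sum>b\<in>{a}. pmf (map_pmf (Pair b) (N b)) (a, x) * pmf M b)"
    unfolding pmf_bind by (rule integral_measure_pmf_real) (auto simp: pmf_eq_0_set_pmf)
  then show ?thesis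
    by (simp add: pmf_map_inj' inj_on_def)
qed

definition posterior :: "('a \<times> 'b) pmf \<Rightarrow> 'b \<Rightarrow> 'a pmf" where
  "posterior J w = map_pmf fst (cond_pmf J {y. snd y = w})"

lemma bind_posterior: "bind_pmf J (\<lambda>y. posterior J (snd y)) = map_pmf fst J"
proof -
  have "bind_pmf J (\<lambda>y. cond_pmf J {z. snd z = snd y}) = J"
    by (rule bind_cond_pmf_cancel) (auto simp: eq_commute)
  then show ?thesis
    unfolding posterior_def by (metis map_bind_pmf)
qed

lemma
  assumes "w \<in> set_pmf (map_pmf snd J)"
  shows pmf_posterior: "pmf (posterior J w) a = pmf J (a, w) / pmf (map_pmf snd J) w"
    and set_posterior: "a \<in> set_pmf (posterior J w) \<Longrightarrow> (a, w) \<in> set_pmf J"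
proof -
  have nonempty: "set_pmf J \<inter> {y. snd y = w} \<noteq> {}"
    using assms by auto
  have "pmf (posterior J w) a = pmf (cond_pmf J {y. snd y = w}) (a, w)"
    unfolding posterior_def
    using pmf_map_inj_on_superset[of fst "{y. snd y = w}" "cond_pmf J {y. snd y = w}" "(a, w)"]
      nonempty by (auto simp: inj_on_def)
  also have "\<dots> = pmf J (a, w) / pmf (map_pmf snd J) w"
    using nonempty by (simp add: pmf_cond pmf_map vimage_def eq_commute)
  finally show "pmf (posterior J w) a = pmf J (a, w) / pmf (map_pmf snd J) w" .
  show "a \<in> set_pmf (posterior J w) \<Longrightarrow> (a, w) \<in> set_pmf J"
    using nonempty unfolding posterior_def by auto
qed

section \<open>The \<open>p\<close>-biased random subset\<close>

lemma set_pmf_Qp: "set_pmf (Qp p Y) \<subseteq> Pow Y"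
  unfolding Qp_def by auto

lemma pmf_Qp:
  assumes "finite Y" "0 \<le> p" "p \<le> 1"
  shows "pmf (Qp p Y) u = (if u \<subseteq> Y then (\<Prod>x\<in>Y. if x \<in> u then p else 1 - p) else 0)"
proof (cases "u \<subseteq> Y")
  case True
  define S where "S = {f::'a \<Rightarrow> bool. \<forall>x. x \<notin> Y \<longrightarrow> f x = False}"
  have inj: "inj_on (\<lambda>f. {x \<in> Y. f x}) S"
    unfolding S_def inj_on_def by (auto simp: fun_eq_iff set_eq_iff)
  have u: "u = (\<lambda>f. {x \<in> Y. f x}) (\<lambda>x. x \<in> u)"
    using True by auto
  have "pmf (Qp p Y) u = pmf (Pi_pmf Y False (\<lambda>_. bernoulli_pmf p)) (\<lambda>x. x \<in> u)"
    unfolding Qp_def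
    by (subst u, rule pmf_map_inj_on_superset[OF inj])
       (use set_Pi_pmf_subset[OF assms(1), of False] True in \<open>auto simp: S_def\<close>)
  also have "\<dots> = (\<Prod>x\<in>Y. if x \<in> u then p else 1 - p)"
    using True assms by (subst pmf_Pi') (auto intro!: prod.cong)
  finally show ?thesis
    using True by simp
next
  case False
  then show ?thesis
    using set_pmf_Qp[of p Y] by (auto simp: pmf_eq_0_set_pmf)
qed

lemma map_union_Qp:
  assumes "finite X"
  shows "map_pmf (\<lambda>v. c \<union> v) (Qp p X) = map_pmf (\<lambda>v. c \<union> v) (Qp p (X - c))"
proof -
  have "Qp p (X - c) = map_pmf (\<lambda>f. {x \<in> X - c. f x}) (Pi_pmf X False (\<lambda>_. bernoulli_pmf p))"
    unfolding Qp_def using assms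
    by (subst Pi_pmf_subset[of X]) (auto simp: map_pmf_comp intro!: map_pmf_cong)
  then show ?thesis
    unfolding Qp_def by (auto simp: map_pmf_comp intro!: map_pmf_cong)
qed

lemma pmf_map_union_Qp:
  assumes "finite X" "c \<subseteq> X" "0 < p" "p \<le> 1"
  shows "pmf (map_pmf (\<lambda>v. c \<union> v) (Qp p X)) w =
           (if c \<subseteq> w \<and> w \<subseteq> X then pmf (Qp p X) w / p ^ card c else 0)"
proof (cases "c \<subseteq> w \<and> w \<subseteq> X")
  case True
  let ?q = "\<lambda>x. if x \<in> w then p else 1 - p"
  have "pmf (map_pmf (\<lambda>v. c \<union> v) (Qp p X)) w = pmf (map_pmf (\<lambda>v. c \<union> v) (Qp p (X - c))) (c \<union> (w - c))"
    using True map_union_Qp[OF assms(1)] by (simp add: Un_absorb1)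
  also have "\<dots> = pmf (Qp p (X - c)) (w - c)"
    by (rule pmf_map_inj_on_superset[of _ "Pow (X - c)"])
       (use True set_pmf_Qp in \<open>auto simp: inj_on_def\<close>)
  also have "\<dots> = prod ?q (X - c)"
    using True assms by (subst pmf_Qp) (auto intro!: prod.cong)
  also have "\<dots> = pmf (Qp p X) w / p ^ card c"
  proof -
    have "prod ?q c = p ^ card c"
      using True by (simp add: subset_eq)
    then have "prod ?q X = prod ?q (X - c) * p ^ card c"
      using prod.subset_diff[OF assms(2,1), of ?q] by simp
    then show ?thesis
      using True assms by (simp add: pmf_Qp)
  qed
  finally show ?thesis
    using True by simp
next
  case False
  have "w \<notin> (\<lambda>v. c \<union> v) ` set_pmf (Qp p X)"
    using False set_pmf_Qp[of p X] assms(2) by auto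
  then have "pmf (map_pmf (\<lambda>v. c \<union> v) (Qp p X)) w = 0"
    by (rule pmf_map_outside)
  then show ?thesis
    using False by auto
qed

lemma expectation_Qp_if_subset:
  fixes f :: "'a set \<Rightarrow> real"
  assumes "finite X" "c \<subseteq> X" "0 < p" "p \<le> 1"
  shows "measure_pmf.expectation (Qp p X) (\<lambda>v. if c \<subseteq> v then f v else 0)
           = p ^ card c * measure_pmf.expectation (Qp p X) (\<lambda>v. f (c \<union> v))"
proof -
  have fin: "finite (Pow X)"
    using assms(1) by simp
  have "measure_pmf.expectation (Qp p X) (\<lambda>v. f (c \<union> v))
          = measure_pmf.expectation (map_pmf (\<lambda>v. c \<union> v) (Qp p X)) f"
    by simp
  also have "\<dots> = (\<Sum>w\<in>Pow X. f w * pmf (map_pmf (\<lambda>v. c \<union> v) (Qp p X)) w)"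
    using set_pmf_Qp[of p X] assms(2) by (intro integral_measure_pmf_real fin) auto
  also have "\<dots> = (\<Sum>w\<in>Pow X. (if c \<subseteq> w then f w else 0) * pmf (Qp p X) w) / p ^ card c"
    unfolding sum_divide_distrib using assms by (intro sum.cong) (auto simp: pmf_map_union_Qp)
  also have "(\<Sum>w\<in>Pow X. (if c \<subseteq> w then f w else 0) * pmf (Qp p X) w)
               = measure_pmf.expectation (Qp p X) (\<lambda>v. if c \<subseteq> v then f v else 0)"
    using set_pmf_Qp[of p X] by (intro integral_measure_pmf_real[symmetric] fin) auto
  finally show ?thesis
    using assms(3) by simp
qed

section \<open>Exponential moments of spread random sets\<close>

lemma power_card_eq_sum_Pow:
  fixes t :: "'b::comm_semiring_1"
  assumes "finite B"
  shows "(1 + t) ^ card B = (\<Sum>T\<in>Pow B. t ^ card T)"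
  using prod_add[OF assms, of "\<lambda>_. t" "\<lambda>_. 1"] by (simp add: add.commute)

lemma expectation_power_card_Int_le_if_spread:
  fixes \<mu> :: real
  assumes spread: "spread R X \<pi>" and "finite X" "a \<subseteq> X" "1 \<le> \<mu>"
  shows "measure_pmf.expectation \<pi> (\<lambda>A. \<mu> ^ card (a \<inter> A)) \<le> (1 + (\<mu> - 1) / R) ^ card a"
proof -
  have fin: "finite a" "finite (set_pmf \<pi>)"
    using assms by (auto simp: spread_def random_subset_of_def intro: finite_subset)
  have expand: "\<mu> ^ card (a \<inter> A) = (\<Sum>T\<in>Pow a. (\<mu> - 1) ^ card T * indicator {A. T \<subseteq> A} A)" for A
  proof -
    have "(\<Sum>T\<in>Pow a. (\<mu> - 1) ^ card T * indicator {A. T \<subseteq> A} A)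
            = (\<Sum>T\<in>Pow (a \<inter> A). (\<mu> - 1) ^ card T)"
      using fin by (intro sum.mono_neutral_cong_right) auto
    then show ?thesis
      using power_card_eq_sum_Pow[of "a \<inter> A" "\<mu> - 1"] fin by simp
  qed
  have "measure_pmf.expectation \<pi> (\<lambda>A. \<mu> ^ card (a \<inter> A))
          = (\<Sum>T\<in>Pow a. (\<mu> - 1) ^ card T * measure_pmf.prob \<pi> {A. T \<subseteq> A})"
    by (simp only: expand, subst Bochner_Integration.integral_sum)
       (auto intro: integrable_measure_pmf_finite[OF fin(2)])
  also have "\<dots> \<le> (\<Sum>T\<in>Pow a. (\<mu> - 1) ^ card T * inverse (R ^ card T))"
    using spread assms(3,4) by (intro sum_mono mult_left_mono) (auto simp: spread_def)
  also have "\<dots> = (1 + (\<mu> - 1) / R) ^ card a"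
    using power_card_eq_sum_Pow[OF fin(1), of "(\<mu> - 1) / R"]
    by (simp add: divide_inverse power_mult_distrib power_inverse)
  finally show ?thesis .
qed

lemma if_less_inverse_power_le:
  fixes \<epsilon> l p :: real and k m :: nat
  assumes "0 \<le> \<epsilon>" "1 \<le> l" "0 < p"
  shows "(if \<epsilon> * k < m then 1 / p ^ m else 0) \<le> (l / p) ^ m / l ^ (nat \<lfloor>\<epsilon> * k\<rfloor> + 1)"
proof (cases "\<epsilon> * k < m")
  case True
  then have "\<lfloor>\<epsilon> * k\<rfloor> < int m"
    by (metis floor_less_iff of_int_of_nat_eq)
  moreover have "0 \<le> \<lfloor>\<epsilon> * k\<rfloor>"
    using assms(1) by simp
  ultimately have "nat \<lfloor>\<epsilon> * k\<rfloor> + 1 \<le> m"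
    by arith
  then have "l ^ (nat \<lfloor>\<epsilon> * k\<rfloor> + 1) \<le> l ^ m"
    using assms(2) by (rule power_increasing)
  then have "(l / p) ^ m / l ^ m \<le> (l / p) ^ m / l ^ (nat \<lfloor>\<epsilon> * k\<rfloor> + 1)"
    using assms by (intro divide_left_mono) auto
  then show ?thesis
    using True assms by (simp add: power_divide)
qed (use assms in simp)

lemma expectation_large_overlap_le_if_spread:
  fixes \<epsilon> p R :: real
  assumes spread: "spread R X \<pi>" and "finite X" "a \<subseteq> X"
    and p: "0 < p" "p \<le> 1" and "0 < R" and large: "exp 1 \<le> \<epsilon> * p * R"
  shows "measure_pmf.expectation \<pi>
           (\<lambda>A. if \<epsilon> * card a < card (a \<inter> A) then 1 / p ^ card (a \<inter> A) else 0)
         \<le> exp 1 / (\<epsilon> * p * R)"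
proof -
  define l where "l = \<epsilon> * p * R"
  define s where "s = nat \<lfloor>\<epsilon> * card a\<rfloor> + 1"
  have fin: "finite (set_pmf \<pi>)"
    using spread \<open>finite X\<close> by (auto simp: spread_def random_subset_of_def intro: finite_subset)
  have "1 \<le> l"
    using large by (simp add: l_def order.trans[OF _ large])
  then have "0 < \<epsilon>"
    using zero_less_mult_pos2[of \<epsilon> "p * R"] p \<open>0 < R\<close> by (simp add: l_def mult.assoc)
  have "l / p = \<epsilon> * R"
    using p by (simp add: l_def)
  moreover have "1 \<le> l / p"
    using \<open>1 \<le> l\<close> p by (simp add: le_divide_eq)
  ultimately have "1 \<le> \<epsilon> * R"
    by simp
  (* Markov's inequality for the moment with base \<epsilon> R; the threshold s is the least integer
     above \<epsilon> |a|, and s \<ge> 1 is what makes (e / l)^s \<le> e / l at the end. *)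
  have "measure_pmf.expectation \<pi>
          (\<lambda>A. if \<epsilon> * card a < card (a \<inter> A) then 1 / p ^ card (a \<inter> A) else 0)
        \<le> measure_pmf.expectation \<pi> (\<lambda>A. (\<epsilon> * R) ^ card (a \<inter> A)) / l ^ s"
    using if_less_inverse_power_le[OF less_imp_le[OF \<open>0 < \<epsilon>\<close>] \<open>1 \<le> l\<close> p(1)]
    unfolding \<open>l / p = \<epsilon> * R\<close> s_def
    by (subst integral_divide_zero[symmetric], intro integral_mono integrable_measure_pmf_finite fin)
  also have "\<dots> \<le> (1 + (\<epsilon> * R - 1) / R) ^ card a / l ^ s"
    using expectation_power_card_Int_le_if_spread[OF spread \<open>finite X\<close> \<open>a \<subseteq> X\<close> \<open>1 \<le> \<epsilon> * R\<close>]
      \<open>1 \<le> l\<close> by (simp add: divide_right_mono)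
  also have "\<dots> \<le> exp \<epsilon> ^ card a / l ^ s"
  proof -
    have "1 + (\<epsilon> * R - 1) / R \<le> 1 + \<epsilon>"
      using \<open>0 < R\<close> by (simp add: diff_divide_distrib)
    also have "\<dots> \<le> exp \<epsilon>"
      by (rule exp_ge_add_one_self)
    finally show ?thesis
      using \<open>1 \<le> \<epsilon> * R\<close> \<open>0 < R\<close> \<open>1 \<le> l\<close> by (intro divide_right_mono power_mono) auto
  qed
  also have "\<dots> \<le> exp 1 ^ s / l ^ s"
  proof -
    have "\<epsilon> * card a < s"
      unfolding s_def by linarith
    then show ?thesis
      using \<open>1 \<le> l\<close> by (simp add: divide_right_mono exp_of_nat_mult[symmetric] mult.commute)
  qed
  also have "\<dots> \<le> exp 1 / l"
    using power_decreasing[of 1 s "exp 1 / l"] large \<open>1 \<le> l\<close> by (simp add: s_def l_def power_divide)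
  finally show ?thesis
    unfolding l_def .
qed

definition uncovered_fraction :: "'a set \<times> 'a set \<times> 'a set \<Rightarrow> real" where
  "uncovered_fraction = (\<lambda>(A, A', V). if A \<noteq> {} then real (card (A' - V)) / real (card A) else 0)"

definition overlap_fraction :: "'a set \<times> 'a set \<Rightarrow> real" where
  "overlap_fraction = (\<lambda>(A, A'). if A \<noteq> {} then real (card (A \<inter> A')) / real (card A) else 0)"

lemma overlap_fraction_le_1: "overlap_fraction (a, a') \<le> 1"
proof (cases "finite a")
  case True
  then have "card (a \<inter> a') \<le> card a"
    by (intro card_mono) auto
  then show ?thesis
    unfolding overlap_fraction_def by (auto simp: divide_le_eq_1)
qed (simp add: overlap_fraction_def)

lemma overlap_fraction_le:
  fixes \<epsilon> :: real
  assumes "0 \<le> \<epsilon>"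
  shows "overlap_fraction (a, a') \<le> \<epsilon> + (if \<epsilon> * card a < card (a \<inter> a') then 1 else 0)"
proof -
  consider "\<epsilon> * card a < card (a \<inter> a')" | "a = {}" | "\<not> \<epsilon> * card a < card (a \<inter> a')" "a \<noteq> {}"
    by blast
  then show ?thesis
  proof cases
    case 1
    then show ?thesis
      using overlap_fraction_le_1[of a a'] assms by simp
  qed (use assms in \<open>auto simp: overlap_fraction_def divide_le_eq mult.commute\<close>)
qed

section \<open>The resampling coupling\<close>

locale union_resampling =
  fixes X :: "'a set" and p :: real and \<pi> :: "'a set pmf"
  assumes finite_X: "finite X" and p_pos: "0 < p" and p_le_1: "p \<le> 1"
    and random_subset: "random_subset_of X \<pi>"
begin

abbreviation Q :: "'a set pmf" where
  "Q \<equiv> Qp p X"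

definition joint :: "('a set \<times> 'a set) pmf" where
  "joint = map_pmf (\<lambda>(a, v). (a, a \<union> v)) (pair_pmf \<pi> Q)"

definition coupling :: "('a set \<times> 'a set \<times> 'a set) pmf" where
  "coupling = bind_pmf (pair_pmf \<pi> Q)
     (\<lambda>(a, v). map_pmf (\<lambda>a'. (a, a', v)) (posterior joint (a \<union> v)))"

text \<open>Given \<open>A \<union> V = w\<close>, the posterior weight of \<open>a \<subseteq> w\<close> is proportional to
  \<open>pmf \<pi> a / p ^ card a\<close>; \<open>normalizer w\<close> is the normalizing constant.\<close>
definition normalizer :: "'a set \<Rightarrow> real" where
  "normalizer w = (\<Sum>b\<in>Pow X. if b \<subseteq> w then pmf \<pi> b / p ^ card b else 0)"

definition mean_inv_normalizer :: "'a set \<Rightarrow> real" where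
  "mean_inv_normalizer c = measure_pmf.expectation Q (\<lambda>v. 1 / normalizer (c \<union> v))"

lemma set_pmf_\<pi>: "set_pmf \<pi> \<subseteq> Pow X"
  using random_subset unfolding random_subset_of_def .

lemma finite_Pow_X: "finite (Pow X)"
  using finite_X by simp

lemma set_pmf_joint: "set_pmf joint \<subseteq> {(a, w). a \<subseteq> w \<and> w \<subseteq> X}"
  using set_pmf_\<pi> set_pmf_Qp[of p X] unfolding joint_def by auto

lemma joint_eq_bind: "joint = bind_pmf \<pi> (\<lambda>a. map_pmf (Pair a) (map_pmf (\<lambda>v. a \<union> v) Q))"
  unfolding joint_def pair_pmf_def
  by (simp add: map_bind_pmf map_pmf_comp bind_return_pmf map_pmf_def[symmetric])

lemma pmf_joint:
  assumes "w \<subseteq> X"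
  shows "pmf joint (a, w) = (if a \<subseteq> w then pmf \<pi> a * pmf Q w / p ^ card a else 0)"
proof (cases "a \<subseteq> X")
  case True
  then show ?thesis
    using assms pmf_map_union_Qp[OF finite_X True p_pos p_le_1]
    by (auto simp: joint_eq_bind pmf_bind_Pair)
next
  case False
  then have "pmf \<pi> a = 0"
    using set_pmf_\<pi> by (auto simp: set_pmf_iff)
  then show ?thesis
    by (simp add: joint_eq_bind pmf_bind_Pair)
qed

lemma pmf_snd_joint_eq_sum:
  "pmf (map_pmf snd joint) w = (\<Sum>a\<in>Pow X. pmf \<pi> a * pmf (map_pmf (\<lambda>v. a \<union> v) Q) w)"
proof -
  have "map_pmf snd joint = bind_pmf \<pi> (\<lambda>a. map_pmf (\<lambda>v. a \<union> v) Q)"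
    by (simp add: joint_eq_bind map_bind_pmf map_pmf_comp)
  then show ?thesis
    using set_pmf_\<pi>
    by (simp add: pmf_bind integral_measure_pmf_real[OF finite_Pow_X] subset_eq mult.commute)
qed

lemma pmf_snd_joint:
  assumes "w \<subseteq> X"
  shows "pmf (map_pmf snd joint) w = pmf Q w * normalizer w"
  unfolding pmf_snd_joint_eq_sum normalizer_def sum_distrib_left
  using assms by (intro sum.cong) (auto simp: pmf_map_union_Qp[OF finite_X _ p_pos p_le_1])

lemma pmf_posterior_joint:
  assumes "w \<in> set_pmf (map_pmf snd joint)"
  shows "pmf (posterior joint w) a = (if a \<subseteq> w then pmf \<pi> a / p ^ card a / normalizer w else 0)"
proof -
  have "w \<subseteq> X"
    using assms set_pmf_joint by auto
  moreover have "pmf Q w \<noteq> 0"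
    using assms \<open>w \<subseteq> X\<close> unfolding set_pmf_iff by (simp add: pmf_snd_joint)
  ultimately show ?thesis
    using assms by (simp add: pmf_posterior pmf_snd_joint pmf_joint)
qed

lemma coupling_eq_bind:
  "coupling = bind_pmf (pair_pmf \<pi> Q)
     (\<lambda>y. map_pmf (\<lambda>a'. (fst y, a', snd y)) (posterior joint (fst y \<union> snd y)))"
  unfolding coupling_def by (rule bind_pmf_cong) (auto simp: split_beta)

lemma map_A_coupling: "map_pmf (\<lambda>(A, A', V). A) coupling = \<pi>"
  unfolding coupling_eq_bind
  by (simp add: map_bind_pmf map_pmf_comp map_pmf_def[symmetric] map_fst_pair_pmf)

lemma map_V_coupling: "map_pmf (\<lambda>(A, A', V). V) coupling = Q"
  unfolding coupling_eq_bind
  by (simp add: map_bind_pmf map_pmf_comp map_pmf_def[symmetric] map_snd_pair_pmf)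

lemma map_AV_coupling: "map_pmf (\<lambda>(A, A', V). (A, V)) coupling = pair_pmf \<pi> Q"
  unfolding coupling_eq_bind by (simp add: map_bind_pmf map_pmf_comp map_pmf_def[symmetric])

text \<open>\<open>A'\<close> is drawn from the posterior of \<open>A\<close> given \<open>A \<union> V\<close>, so \<open>(A', A \<union> V)\<close> has the
  same law as \<open>(A, A \<union> V)\<close>.\<close>
lemma map_A'_coupling: "map_pmf (\<lambda>(A, A', V). A') coupling = \<pi>"
proof -
  have "map_pmf (\<lambda>(A, A', V). A') coupling = bind_pmf joint (\<lambda>y. posterior joint (snd y))"
    unfolding coupling_eq_bind joint_def
    by (simp add: map_bind_pmf map_pmf_comp bind_map_pmf case_prod_beta)
  also have "\<dots> = map_pmf fst joint"
    by (rule bind_posterior)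
  also have "\<dots> = \<pi>"
    unfolding joint_def by (simp add: map_pmf_comp case_prod_beta map_fst_pair_pmf)
  finally show ?thesis .
qed

lemma set_pmf_coupling:
  assumes "(a, a', v) \<in> set_pmf coupling"
  shows "a \<subseteq> X" "v \<subseteq> X" "a' \<subseteq> a \<union> v"
proof -
  have av: "a \<in> set_pmf \<pi>" "v \<in> set_pmf Q" and a': "a' \<in> set_pmf (posterior joint (a \<union> v))"
    using assms unfolding coupling_def by auto
  then show "a \<subseteq> X" "v \<subseteq> X"
    using set_pmf_\<pi> set_pmf_Qp[of p X] by auto
  have "(a, a \<union> v) \<in> set_pmf joint"
    using av unfolding joint_def by force
  then have "(a', a \<union> v) \<in> set_pmf joint"
    using set_posterior[OF _ a'] by force
  then show "a' \<subseteq> a \<union> v"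
    using set_pmf_joint by auto
qed

lemma finite_set_pmf_coupling: "finite (set_pmf coupling)"
proof (rule finite_subset)
  show "set_pmf coupling \<subseteq> Pow X \<times> Pow X \<times> Pow X"
    using set_pmf_coupling by fastforce
qed (use finite_X in simp)

lemma set_pmf_AA'_coupling:
  "set_pmf (map_pmf (\<lambda>(A, A', V). (A, A')) coupling) \<subseteq> Pow X \<times> Pow X"
  using set_pmf_coupling by fastforce

lemma normalizer_nonneg: "0 \<le> normalizer w"
  unfolding normalizer_def using p_pos by (intro sum_nonneg) auto

lemma normalizer_mono: "w \<subseteq> w' \<Longrightarrow> normalizer w \<le> normalizer w'"
  unfolding normalizer_def using p_pos by (intro sum_mono) auto

lemma mean_inv_normalizer_nonneg: "0 \<le> mean_inv_normalizer c"
  unfolding mean_inv_normalizer_def using normalizer_nonneg by simp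

lemma normalizer_ge:
  assumes "a \<subseteq> X" "a \<subseteq> w"
  shows "pmf \<pi> a / p ^ card a \<le> normalizer w"
proof -
  have "pmf \<pi> a / p ^ card a = (if a \<subseteq> w then pmf \<pi> a / p ^ card a else 0)"
    using assms by simp
  also have "\<dots> \<le> normalizer w"
    unfolding normalizer_def using assms finite_Pow_X p_pos
    by (intro member_le_sum) auto
  finally show ?thesis .
qed

lemma mean_inv_normalizer_antimono:
  assumes "a \<subseteq> X" "0 < pmf \<pi> a" "a \<subseteq> c"
  shows "mean_inv_normalizer c \<le> mean_inv_normalizer a"
  unfolding mean_inv_normalizer_def
proof (rule integral_mono)
  fix v
  have "0 < pmf \<pi> a / p ^ card a"
    using assms p_pos by simp
  also have "\<dots> \<le> normalizer (a \<union> v)"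
    using assms by (intro normalizer_ge) auto
  finally have "0 < normalizer (a \<union> v)" .
  moreover have "normalizer (a \<union> v) \<le> normalizer (c \<union> v)"
    using assms by (intro normalizer_mono) auto
  ultimately show "1 / normalizer (c \<union> v) \<le> 1 / normalizer (a \<union> v)"
    by (intro frac_le) auto
qed (auto intro!: integrable_measure_pmf_finite
      finite_subset[OF set_pmf_Qp finite_Pow_X])

lemma mean_inv_normalizer_eq_sum:
  assumes "a \<subseteq> X"
  shows "mean_inv_normalizer a = (\<Sum>w\<in>Pow X. pmf (map_pmf (\<lambda>v. a \<union> v) Q) w / normalizer w)"
proof -
  have "mean_inv_normalizer a
          = measure_pmf.expectation (map_pmf (\<lambda>v. a \<union> v) Q) (\<lambda>w. 1 / normalizer w)"
    unfolding mean_inv_normalizer_def by simp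
  also have "\<dots> = (\<Sum>w\<in>Pow X. 1 / normalizer w * pmf (map_pmf (\<lambda>v. a \<union> v) Q) w)"
    using set_pmf_Qp[of p X] assms by (intro integral_measure_pmf_real finite_Pow_X) auto
  finally show ?thesis
    by simp
qed

lemma expectation_mean_inv_normalizer_le_1:
  "measure_pmf.expectation \<pi> mean_inv_normalizer \<le> 1"
proof -
  have "measure_pmf.expectation \<pi> mean_inv_normalizer = (\<Sum>a\<in>Pow X. mean_inv_normalizer a * pmf \<pi> a)"
    using set_pmf_\<pi> by (intro integral_measure_pmf_real finite_Pow_X) auto
  also have "\<dots> = (\<Sum>a\<in>Pow X. \<Sum>w\<in>Pow X. pmf \<pi> a * pmf (map_pmf (\<lambda>v. a \<union> v) Q) w / normalizer w)"
    by (intro sum.cong refl) (simp add: mean_inv_normalizer_eq_sum sum_distrib_left mult.commute)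
  also have "\<dots> = (\<Sum>w\<in>Pow X. pmf (map_pmf snd joint) w / normalizer w)"
    by (subst sum.swap) (simp add: pmf_snd_joint_eq_sum sum_divide_distrib)
  also have "\<dots> \<le> (\<Sum>w\<in>Pow X. pmf Q w)"
    using normalizer_nonneg by (intro sum_mono) (auto simp: pmf_snd_joint)
  also have "\<dots> = 1"
    using finite_Pow_X set_pmf_Qp by (rule sum_pmf_eq_1)
  finally show ?thesis .
qed

lemma map_AA'_coupling:
  "map_pmf (\<lambda>(A, A', V). (A, A')) coupling
     = bind_pmf \<pi> (\<lambda>a. map_pmf (Pair a) (bind_pmf Q (\<lambda>v. posterior joint (a \<union> v))))"
  unfolding coupling_def pair_pmf_def
  by (simp add: map_bind_pmf map_pmf_comp bind_assoc_pmf bind_return_pmf)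

lemma pmf_AA'_coupling:
  assumes "a \<subseteq> X" "a' \<subseteq> X"
  shows "pmf (map_pmf (\<lambda>(A, A', V). (A, A')) coupling) (a, a')
           = pmf \<pi> a * pmf \<pi> a' * mean_inv_normalizer (a \<union> a') / p ^ card (a \<inter> a')"
proof (cases "a \<in> set_pmf \<pi>")
  case False
  then show ?thesis
    by (simp add: map_AA'_coupling pmf_bind_Pair set_pmf_iff)
next
  case True
  define c where "c = a' - a"
  have fin: "finite a" "finite a'"
    using assms finite_X by (auto intro: finite_subset)
  have "pmf (bind_pmf Q (\<lambda>v. posterior joint (a \<union> v))) a'
          = measure_pmf.expectation Q (\<lambda>v. pmf (posterior joint (a \<union> v)) a')"
    by (rule pmf_bind)
  (* Given A = a, the event a' \<subseteq> a \<union> V is c \<subseteq> V, and conditioning Q on c \<subseteq> V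
     amounts to adding c to V. *)
  also have "\<dots> = measure_pmf.expectation Q
                    (\<lambda>v. if c \<subseteq> v then pmf \<pi> a' / p ^ card a' / normalizer (a \<union> v) else 0)"
  proof (rule integral_cong_AE)
    have "a \<union> v \<in> set_pmf (map_pmf snd joint)" if "v \<in> set_pmf Q" for v
      using True that unfolding joint_def by force
    then show "AE v in Q. pmf (posterior joint (a \<union> v)) a'
                 = (if c \<subseteq> v then pmf \<pi> a' / p ^ card a' / normalizer (a \<union> v) else 0)"
      by (auto simp: AE_measure_pmf_iff pmf_posterior_joint c_def)
  qed simp_all
  also have "\<dots> = p ^ card c * measure_pmf.expectation Q
                    (\<lambda>v. pmf \<pi> a' / p ^ card a' / normalizer (a \<union> (c \<union> v)))"
    using assms by (intro expectation_Qp_if_subset finite_X p_pos p_le_1) (auto simp: c_def)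
  also have "\<dots> = p ^ card c * (pmf \<pi> a' / p ^ card a' * mean_inv_normalizer (a \<union> a'))"
  proof -
    have "a \<union> (c \<union> v) = (a \<union> a') \<union> v" for v
      by (auto simp: c_def)
    then show ?thesis
      unfolding mean_inv_normalizer_def
      using integral_mult_right_zero[of Q "pmf \<pi> a' / p ^ card a'" "\<lambda>v. 1 / normalizer (a \<union> a' \<union> v)"]
      by simp
  qed
  also have "\<dots> = pmf \<pi> a' * mean_inv_normalizer (a \<union> a') / p ^ card (a \<inter> a')"
  proof -
    have "card a' = card c + card (a \<inter> a')"
      unfolding c_def using fin card_Un_disjoint[of "a' - a" "a \<inter> a'"]
      by (metis Diff_Diff_Int Diff_disjoint Int_commute Un_Diff_Int finite_Diff finite_Int)
    then show ?thesis
      using p_pos by (simp add: power_add field_simps)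
  qed
  finally show ?thesis
    by (simp add: map_AA'_coupling pmf_bind_Pair)
qed

lemma uncovered_fraction_le_overlap_fraction:
  assumes "(a, a', v) \<in> set_pmf coupling"
  shows "uncovered_fraction (a, a', v) \<le> overlap_fraction (a, a')"
proof -
  have "finite a" "a' - v \<subseteq> a \<inter> a'"
    using set_pmf_coupling[OF assms] finite_X by (auto intro: finite_subset)
  then have "card (a' - v) \<le> card (a \<inter> a')"
    by (intro card_mono) auto
  then show ?thesis
    unfolding uncovered_fraction_def overlap_fraction_def by (simp add: divide_right_mono)
qed

lemma expectation_uncovered_fraction_le:
  "measure_pmf.expectation coupling uncovered_fraction
     \<le> measure_pmf.expectation (map_pmf (\<lambda>(A, A', V). (A, A')) coupling) overlap_fraction"
proof -
  have "measure_pmf.expectation coupling uncovered_fraction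
          \<le> measure_pmf.expectation coupling (\<lambda>x. overlap_fraction (fst x, fst (snd x)))"
  proof (intro integral_mono_AE integrable_measure_pmf_finite finite_set_pmf_coupling)
    show "AE x in coupling. uncovered_fraction x \<le> overlap_fraction (fst x, fst (snd x))"
      unfolding AE_measure_pmf_iff by (metis prod.collapse uncovered_fraction_le_overlap_fraction)
  qed
  then show ?thesis
    by (simp add: split_beta)
qed

lemma expectation_uncovered_fraction_le_1:
  "measure_pmf.expectation coupling uncovered_fraction \<le> 1"
proof (rule measure_pmf.integral_le_const[of coupling])
  show "integrable coupling uncovered_fraction"
    by (rule integrable_measure_pmf_finite[OF finite_set_pmf_coupling])
  have "uncovered_fraction (a, a', v) \<le> 1" if "(a, a', v) \<in> set_pmf coupling" for a a' v
    using uncovered_fraction_le_overlap_fraction[OF that] overlap_fraction_le_1[of a a'] by simp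
  then show "AE x in coupling. uncovered_fraction x \<le> 1"
    unfolding AE_measure_pmf_iff by auto
qed

lemma pmf_AA'_coupling_le:
  assumes "a \<subseteq> X" "a' \<subseteq> X"
  shows "pmf (map_pmf (\<lambda>(A, A', V). (A, A')) coupling) (a, a')
           \<le> pmf \<pi> a * mean_inv_normalizer a * pmf \<pi> a' / p ^ card (a \<inter> a')"
proof (cases "0 < pmf \<pi> a")
  case True
  then have "mean_inv_normalizer (a \<union> a') \<le> mean_inv_normalizer a"
    using assms by (intro mean_inv_normalizer_antimono) auto
  then have "pmf \<pi> a * pmf \<pi> a' * mean_inv_normalizer (a \<union> a') / p ^ card (a \<inter> a')
               \<le> pmf \<pi> a * pmf \<pi> a' * mean_inv_normalizer a / p ^ card (a \<inter> a')"
    using p_pos by (intro divide_right_mono mult_left_mono) auto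
  then show ?thesis
    using assms by (simp add: pmf_AA'_coupling ac_simps)
next
  case False
  then have "pmf \<pi> a = 0"
    using pmf_nonneg[of \<pi> a] by linarith
  then show ?thesis
    using assms by (simp add: pmf_AA'_coupling)
qed

lemma expectation_large_overlap_le:
  assumes spread: "spread R X \<pi>" and "0 < R" and large: "exp 1 \<le> \<epsilon> * p * R"
  shows "measure_pmf.expectation (map_pmf (\<lambda>(A, A', V). (A, A')) coupling)
           (\<lambda>(a, a'). if \<epsilon> * card a < card (a \<inter> a') then 1 else 0) \<le> exp 1 / (\<epsilon> * p * R)"
    (is "measure_pmf.expectation ?law ?large \<le> ?q")
proof -
  let ?weight = "\<lambda>a a'. if \<epsilon> * card a < card (a \<inter> a') then 1 / p ^ card (a \<inter> a') else 0"
  have "measure_pmf.expectation ?law ?large = (\<Sum>y\<in>Pow X \<times> Pow X. ?large y * pmf ?law y)"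
    using set_pmf_AA'_coupling finite_Pow_X by (intro integral_measure_pmf_real) auto
  also have "\<dots> = (\<Sum>a\<in>Pow X. \<Sum>a'\<in>Pow X. ?large (a, a') * pmf ?law (a, a'))"
    by (simp add: sum.cartesian_product case_prod_beta)
  also have "\<dots> \<le> (\<Sum>a\<in>Pow X. pmf \<pi> a * mean_inv_normalizer a *
                      measure_pmf.expectation \<pi> (?weight a))"
  proof (intro sum_mono)
    fix a assume "a \<in> Pow X"
    have "(\<Sum>a'\<in>Pow X. ?large (a, a') * pmf ?law (a, a'))
            \<le> (\<Sum>a'\<in>Pow X. pmf \<pi> a * mean_inv_normalizer a * (?weight a a' * pmf \<pi> a'))"
      using pmf_AA'_coupling_le \<open>a \<in> Pow X\<close> by (intro sum_mono) auto
    also have "\<dots> = pmf \<pi> a * mean_inv_normalizer a * measure_pmf.expectation \<pi> (?weight a)"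
      using set_pmf_\<pi>
      by (simp add: sum_distrib_left[symmetric] integral_measure_pmf_real[OF finite_Pow_X] subset_eq)
    finally show "(\<Sum>a'\<in>Pow X. ?large (a, a') * pmf ?law (a, a'))
                    \<le> pmf \<pi> a * mean_inv_normalizer a * measure_pmf.expectation \<pi> (?weight a)" .
  qed
  also have "\<dots> \<le> (\<Sum>a\<in>Pow X. pmf \<pi> a * mean_inv_normalizer a * ?q)"
    using expectation_large_overlap_le_if_spread[OF spread finite_X _ p_pos p_le_1 \<open>0 < R\<close> large]
    by (intro sum_mono mult_left_mono) (auto simp: mean_inv_normalizer_nonneg)
  also have "\<dots> = (\<Sum>a\<in>Pow X. pmf \<pi> a * mean_inv_normalizer a) * ?q"
    by (rule sum_distrib_right[symmetric])
  also have "(\<Sum>a\<in>Pow X. pmf \<pi> a * mean_inv_normalizer a) = measure_pmf.expectation \<pi> mean_inv_normalizer"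
    using set_pmf_\<pi> by (subst integral_measure_pmf_real[OF finite_Pow_X]) (auto simp: mult.commute)
  also have "\<dots> * ?q \<le> ?q"
    using expectation_mean_inv_normalizer_le_1 less_le_trans[OF exp_gt_zero large]
      mean_inv_normalizer_nonneg
    by (intro mult_left_le_one_le Bochner_Integration.integral_nonneg) auto
  finally show ?thesis .
qed

lemma expectation_uncovered_fraction_le_eps:
  assumes spread: "spread R X \<pi>" and "0 < R" "0 < \<epsilon>"
  shows "measure_pmf.expectation coupling uncovered_fraction \<le> \<epsilon> + exp 1 / (\<epsilon> * p * R)"
proof (cases "exp 1 \<le> \<epsilon> * p * R")
  case True
  let ?law = "map_pmf (\<lambda>(A, A', V). (A, A')) coupling"
  let ?large = "\<lambda>(a, a'). if \<epsilon> * card a < card (a \<inter> a') then 1 else (0::real)"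
  have int: "integrable ?law f" for f :: "_ \<Rightarrow> real"
    by (rule integrable_measure_pmf_finite) (simp add: finite_set_pmf_coupling)
  have "measure_pmf.expectation coupling uncovered_fraction
          \<le> measure_pmf.expectation ?law overlap_fraction"
    by (rule expectation_uncovered_fraction_le)
  also have "\<dots> \<le> measure_pmf.expectation ?law (\<lambda>y. \<epsilon> + ?large y)"
  proof (intro integral_mono int)
    fix y :: "'a set \<times> 'a set"
    show "overlap_fraction y \<le> \<epsilon> + ?large y"
      using overlap_fraction_le[of \<epsilon> "fst y" "snd y"] \<open>0 < \<epsilon>\<close> by (simp add: split_beta)
  qed
  also have "\<dots> = \<epsilon> + measure_pmf.expectation ?law ?large"
    using int by simp
  also have "\<dots> \<le> \<epsilon> + exp 1 / (\<epsilon> * p * R)"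
    using expectation_large_overlap_le[OF spread \<open>0 < R\<close> True] by simp
  finally show ?thesis .
next
  case False
  then have "1 \<le> exp 1 / (\<epsilon> * p * R)"
    using assms p_pos by simp
  then show ?thesis
    using expectation_uncovered_fraction_le_1 \<open>0 < \<epsilon>\<close> by linarith
qed

lemma expectation_uncovered_fraction_le_cube_root:
  assumes spread: "spread R X \<pi>" and "0 < R"
  shows "measure_pmf.expectation coupling uncovered_fraction \<le> 7 / (p * R) powr (1/3)"
proof -
  define t where "t = (p * R) powr (1/3)"
  have "0 < t"
    using p_pos \<open>0 < R\<close> by (simp add: t_def)
  have "t ^ 3 = p * R"
    using p_pos \<open>0 < R\<close> by (simp add: t_def powr_realpow[symmetric] powr_powr)
  show ?thesis
  proof (cases "t \<le> 1")
    case True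
    then have "1 \<le> 7 / t"
      using \<open>0 < t\<close> by (simp add: field_simps)
    then show ?thesis
      using expectation_uncovered_fraction_le_1 by (simp add: t_def)
  next
    case False
    have "1 / t * p * R = t ^ 3 / t"
      using \<open>t ^ 3 = p * R\<close> by simp
    also have "\<dots> = t\<^sup>2"
      using \<open>0 < t\<close> by (simp add: power2_eq_square power3_eq_cube)
    finally have "exp 1 / (1 / t * p * R) = exp 1 / t\<^sup>2"
      by simp
    also have "\<dots> \<le> 3 / t"
      using False exp_le by (simp add: power2_eq_square field_simps)
    finally have "exp 1 / (1 / t * p * R) \<le> 3 / t" .
    moreover have "1 / t + 3 / t \<le> 7 / t"
      using \<open>0 < t\<close> by (simp add: divide_right_mono)
    moreover have "measure_pmf.expectation coupling uncovered_fraction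
                     \<le> 1 / t + exp 1 / (1 / t * p * R)"
      using \<open>0 < t\<close> by (intro expectation_uncovered_fraction_le_eps[OF spread \<open>0 < R\<close>]) simp
    ultimately show ?thesis
      unfolding t_def[symmetric] by linarith
  qed
qed

end

theorem theorem2:
  fixes X :: "'a set" and R p :: real and \<pi> :: "'a set pmf"
  assumes "finite X" and "R > 1" and "0 < p" and "p \<le> 1"
    and "spread R X \<pi>"
  shows "\<exists>P :: ('a set \<times> 'a set \<times> 'a set) pmf.
           map_pmf (\<lambda>(A, A', V). A) P = \<pi> \<and>
           map_pmf (\<lambda>(A, A', V). A') P = \<pi> \<and>
           map_pmf (\<lambda>(A, A', V). V) P = Qp p X \<and>
           map_pmf (\<lambda>(A, A', V). (A, V)) P = pair_pmf \<pi> (Qp p X) \<and>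
           measure_pmf.expectation P
             (\<lambda>(A, A', V). if A \<noteq> {} then real (card (A' - V)) / real (card A) else 0)
             \<le> 7 / (p * R) powr (1/3) \<and>
           spread R X (map_pmf (\<lambda>(A, A', V). A') P)"
proof -
  interpret union_resampling X p \<pi>
    using assms by unfold_locales (auto simp: spread_def)
  show ?thesis
  proof (intro exI[of _ coupling] conjI)
    show "measure_pmf.expectation coupling
            (\<lambda>(A, A', V). if A \<noteq> {} then real (card (A' - V)) / real (card A) else 0)
          \<le> 7 / (p * R) powr (1/3)"
      using expectation_uncovered_fraction_le_cube_root[OF assms(5)] assms(2)
      unfolding uncovered_fraction_def by simp
    show "spread R X (map_pmf (\<lambda>(A, A', V). A') coupling)"
      using assms(5) by (simp add: map_A'_coupling)
  qed (simp_all add: map_A_coupling map_A'_coupling map_V_coupling map_AV_coupling)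
qed

end
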